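(* Let $\mathbf{Q}(t)=(Q_1(t),\ldots,Q_K(t))$, $t\in\{0,1,2,\ldots\}$, be a stochastic vector process with real-valued components and $p(t)$ a real-valued stochastic process on the same probability space. Let $\mathcal{H}(0)=\{\mathbf{Q}(0)\}$ and, for $t>0$, $\mathcal{H}(t)=\{\mathbf{Q}(0),\ldots,\mathbf{Q}(t),p(0),\ldots,p(t-1)\}$. Let $L(\mathbf{Q})=\frac{1}{2}\sum_{k=1}^K w_kQ_k^2$ with constants $w_k>0$, and $\Delta(\mathcal{H}(t))=\mathbb{E}[L(\mathbf{Q}(t+1))-L(\mathbf{Q}(t))\mid \mathcal{H}(t)]$. Suppose: (i) $\mathbb{E}[p(t)^2]<\infty$ for all $t$ and $\sum_{\tau=1}^\infty \mathbb{E}[p(\tau)^2]/\tau^2<\infty$; (ii) there is a finite constant $D>0$ with $\mathbb{E}[(Q_k(t+1)-Q_k(t))^4\mid\mathbf{Q}(t)]\leq D$ for all $t$, all possible $\mathbf{Q}(t)$ and all $k$; (iii) $\mathbb{E}[Q_k(t)^2]$ is finite for all $k,t$ and $\sum_{t=1}^\infty \mathbb{E}[Q_k(t)^2]/t^2<\infty$ for all $k\in\{1,\ldots,K\}$; (iv) there are constants $B$, $p^*$, $V\geq 0$, $\epsilon\geq 0$ such that for all $t$ and all possible $\mathcal{H}(t)$, $$\Delta(\mathcal{H}(t))+V\,\mathbb{E}[p(t)\mid\mathcal{H}(t)]\leq B+Vp^*-\epsilon\sum_{k=1}^K|Q_k(t)|.$$ Then: (a) If $V>0$, then $\limsup_{t\to\infty}\frac{1}{t}\sum_{\tau=0}^{t-1}p(\tau)\leq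 p^*+\frac{B}{V}$ with probability 1. (b) If $\epsilon>0$, then with probability 1, $$\limsup_{t\to\infty}\frac{1}{t}\sum_{\tau=0}^{t-1}\sum_{k=1}^K|Q_k(\tau)|\leq\frac{B}{\epsilon}+\frac{V}{\epsilon}\limsup_{t\to\infty}\frac{1}{t}\sum_{\tau=0}^{t-1}[p^*-p(\tau)].$$
   Context: Time is slotted. "For all possible $\mathcal{H}(t)$" (resp. $\mathbf{Q}(t)$) means for every realization (almost surely). *)

theory Defs
  imports "HOL-Probability.Probability"
begin

definition gen_sigma :: "'a measure \<Rightarrow> ('a \<Rightarrow> real) set \<Rightarrow> 'a measure" where
  "gen_sigma M Xs = sigma (space M) {X -` A \<inter> space M | X A. X \<in> Xs \<and> A \<in> sets borel}"

definition hist :: "'a measure \<Rightarrow> nat \<Rightarrow> (nat \<Rightarrow> nat \<Rightarrow> 'a \<Rightarrow> real) \<Rightarrow> (nat \<Rightarrow> 'a \<Rightarrow> real) \<Rightarrow> nat \<Rightarrow> 'a measure" where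
  "hist M K Q p t = gen_sigma M ({Q \<tau> k | \<tau> k. \<tau> \<le> t \<and> k \<in> {1..K}} \<union> {p \<tau> | \<tau>. \<tau> < t})"

definition qsig :: "'a measure \<Rightarrow> nat \<Rightarrow> (nat \<Rightarrow> nat \<Rightarrow> 'a \<Rightarrow> real) \<Rightarrow> nat \<Rightarrow> 'a measure" where
  "qsig M K Q t = gen_sigma M {Q t k | k. k \<in> {1..K}}"

definition lyap :: "nat \<Rightarrow> (nat \<Rightarrow> real) \<Rightarrow> (nat \<Rightarrow> real) \<Rightarrow> real" where
  "lyap K w q = (1/2) * (\<Sum>k=1..K. w k * (q k)^2)"

end

theory Submission
  imports Defs
begin

text \<open>Summing the drift condition over \<open>t < n\<close> telescopes the Lyapunov function. The
  conditional expectations appearing in it differ from the realised Lyapunov increments and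
  penalties by martingale differences, and the moment assumptions make the series of their
  second moments divided by \<open>t\<^sup>2\<close> converge (for the Lyapunov increment this is where the
  fourth moments of the queue increments enter). A strong law of large numbers for such
  martingale differences (Kolmogorov's maximal inequality, almost sure convergence of
  \<open>\<Sum>t. X t / (t + 1)\<close>, Kronecker's lemma) makes their time averages vanish almost surely,
  and taking the limsup in the time-averaged drift inequality gives both bounds.\<close>

section \<open>Averages of real sequences\<close>

lemma cesaro_mean_tendsto_zero:
  fixes s :: "nat \<Rightarrow> real"
  assumes "s \<longlonglongrightarrow> 0"
  shows "(\<lambda>n. (\<Sum>k<n. s k) / real n) \<longlonglongrightarrow> 0"
proof (rule LIMSEQ_I)
  fix e :: real assume e: "e > 0"
  obtain N where N: "\<And>k. k \<ge> N \<Longrightarrow> \<bar>s k\<bar> < e / 2"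
    using LIMSEQ_D[OF assms, of "e/2"] e by auto
  define C where "C = (\<Sum>k<N. \<bar>s k\<bar>)"
  obtain N' :: nat where N': "real N' > 2 * C / e" using reals_Archimedean2 by blast
  show "\<exists>n0. \<forall>n\<ge>n0. norm ((\<Sum>k<n. s k) / real n - 0) < e"
  proof (intro exI allI impI)
    fix n assume n: "max (Suc N) N' \<le> n"
    then have "N \<le> n" and n_pos: "real n > 0" by auto
    have "\<bar>\<Sum>k<n. s k\<bar> \<le> (\<Sum>k<n. \<bar>s k\<bar>)" by (rule sum_abs)
    also have "\<dots> = C + (\<Sum>k\<in>{N..<n}. \<bar>s k\<bar>)"
      unfolding C_def using \<open>N \<le> n\<close> by (metis atLeast0LessThan sum.atLeastLessThan_concat zero_le)
    also have "(\<Sum>k\<in>{N..<n}. \<bar>s k\<bar>) \<le> (\<Sum>k\<in>{N..<n}. e / 2)"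
      by (rule sum_mono) (use N in \<open>auto simp: less_imp_le\<close>)
    also have "\<dots> \<le> real n * (e / 2)" using e by simp
    finally have "\<bar>\<Sum>k<n. s k\<bar> \<le> C + real n * (e / 2)" by simp
    moreover have "2 * C / e < real n" using N' n by linarith
    then have "C < real n * (e / 2)" using e by (simp add: field_simps)
    ultimately show "norm ((\<Sum>k<n. s k) / real n - 0) < e"
      using n_pos by (simp add: field_simps)
  qed
qed

lemma cesaro_mean_tendsto:
  fixes s :: "nat \<Rightarrow> real"
  assumes "s \<longlonglongrightarrow> L"
  shows "(\<lambda>n. (\<Sum>k<n. s k) / real n) \<longlonglongrightarrow> L"
proof -
  have "(\<lambda>k. s k - L) \<longlonglongrightarrow> 0" using assms by (simp add: LIM_zero)
  then have "(\<lambda>n. (\<Sum>k<n. s k - L) / real n + L) \<longlonglongrightarrow> 0 + L"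
    by (intro tendsto_add cesaro_mean_tendsto_zero tendsto_const)
  moreover have "(\<Sum>k<n. s k - L) / real n + L = (\<Sum>k<n. s k) / real n" if "n > 0" for n
    using that by (simp add: sum_subtractf field_simps)
  ultimately show ?thesis
    by (simp add: Lim_transform_eventually eventually_sequentially exI[of _ 1])
qed

text \<open>With \<open>s n = (\<Sum>k<n. a k / (k + 1))\<close>, Abel summation gives
  \<open>(\<Sum>k<n. a k) = n s n - (\<Sum>k<n. s k)\<close>, which is \<open>o(n)\<close> by Cesaro.\<close>
lemma kronecker_lemma:
  fixes a :: "nat \<Rightarrow> real"
  assumes "summable (\<lambda>k. a k / real (Suc k))"
  shows "(\<lambda>n. (\<Sum>k<n. a k) / real n) \<longlonglongrightarrow> 0"
proof -
  define s where "s = (\<lambda>n. \<Sum>k<n. a k / real (Suc k))"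
  obtain L where s: "s \<longlonglongrightarrow> L" using assms summable_LIMSEQ unfolding s_def by blast
  have abel: "(\<Sum>k<n. a k) = real n * s n - (\<Sum>k<n. s k)" for n
  proof (induction n)
    case (Suc n)
    have "real (Suc n) * s (Suc n) = real (Suc n) * s n + a n"
      unfolding s_def by (simp add: field_simps)
    then show ?case using Suc by (simp add: field_simps)
  qed (simp add: s_def)
  have "(\<lambda>n. s n - (\<Sum>k<n. s k) / real n) \<longlonglongrightarrow> L - L"
    by (intro tendsto_diff s cesaro_mean_tendsto)
  moreover have "s n - (\<Sum>k<n. s k) / real n = (\<Sum>k<n. a k) / real n" if "n > 0" for n
    using that unfolding abel by (simp add: field_simps)
  ultimately show ?thesis
    by (simp add: Lim_transform_eventually eventually_sequentially exI[of _ 1])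
qed

lemma summable_of_small_tails:
  fixes a :: "nat \<Rightarrow> real"
  assumes "\<And>c. c > 0 \<Longrightarrow> \<exists>N. \<forall>j. \<bar>\<Sum>k<j. a (N + k)\<bar> < c"
  shows "summable a"
  unfolding summable_Cauchy
proof (intro allI impI)
  fix e :: real assume "e > 0"
  then obtain N where N: "\<And>j. \<bar>\<Sum>k<j. a (N + k)\<bar> < e / 2" using assms[of "e / 2"] by auto
  have tail: "\<bar>sum a {N..<m}\<bar> < e / 2" if "N \<le> m" for m
  proof -
    have "sum a {N..<m} = (\<Sum>k<m - N. a (N + k))"
      using that sum.shift_bounds_nat_ivl[of a 0 N "m - N"] by (simp add: atLeast0LessThan add.commute)
    then show ?thesis using N[of "m - N"] by simp
  qed
  show "\<exists>N. \<forall>m\<ge>N. \<forall>n. norm (sum a {m..<n}) < e"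
  proof (intro exI allI impI)
    fix m n assume "N \<le> m"
    show "norm (sum a {m..<n}) < e"
    proof (cases "n \<le> m")
      case False
      then have "sum a {m..<n} = sum a {N..<n} - sum a {N..<m}"
        using \<open>N \<le> m\<close> sum.atLeastLessThan_concat[of N m n a] by simp
      then show ?thesis using tail[of n] tail[of m] False \<open>N \<le> m\<close> by simp
    qed (use \<open>e > 0\<close> in simp)
  qed
qed

section \<open>A strong law of large numbers for martingale differences\<close>

context prob_space begin

context
  fixes G :: "'a measure" and f :: "'a \<Rightarrow> real"
  assumes G: "subalgebra M G"
    and f: "f \<in> borel_measurable M" "integrable M (\<lambda>x. (f x)^2)"
begin

lemma cond_exp_sq_integrable_le:
  shows "integrable M (\<lambda>x. (real_cond_exp M G f x)^2)"
    and "(\<integral>x. (real_cond_exp M G f x)^2 \<partial>M) \<le> (\<integral>x. (f x)^2 \<partial>M)"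
proof -
  interpret finite_measure_subalgebra M G using G by unfold_locales
  interpret sigma_finite_subalgebra M G by (rule finite_measure_subalgebra_is_sigma_finite) unfold_locales
  have fi: "integrable M f" by (rule square_integrable_imp_integrable[OF f])
  show ci: "integrable M (\<lambda>x. (real_cond_exp M G f x)^2)"
    using integrable_convex_cond_exp[OF fi, where I=UNIV and q="\<lambda>y. y^2"] f convex_power2 by auto
  have "AE x in M. (real_cond_exp M G f x)^2 \<le> real_cond_exp M G (\<lambda>x. (f x)^2) x"
    using real_cond_exp_jensens_inequality(2)[OF fi, where I=UNIV and q="\<lambda>y. y^2"] f convex_power2
    by auto
  then have "(\<integral>x. (real_cond_exp M G f x)^2 \<partial>M) \<le> (\<integral>x. real_cond_exp M G (\<lambda>x. (f x)^2) x \<partial>M)"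
    by (rule integral_mono_AE[OF ci real_cond_exp_int(1)[OF f(2)]])
  also have "\<dots> = (\<integral>x. (f x)^2 \<partial>M)" by (rule real_cond_exp_int(2)[OF f(2)])
  finally show "(\<integral>x. (real_cond_exp M G f x)^2 \<partial>M) \<le> (\<integral>x. (f x)^2 \<partial>M)" .
qed

lemma cond_centered_sq_integrable_le:
  shows "integrable M (\<lambda>x. (f x - real_cond_exp M G f x)^2)"
    and "(\<integral>x. (f x - real_cond_exp M G f x)^2 \<partial>M) \<le> 4 * (\<integral>x. (f x)^2 \<partial>M)"
proof -
  have pw: "(f x - real_cond_exp M G f x)^2 \<le> 2 * (f x)^2 + 2 * (real_cond_exp M G f x)^2" for x
    using zero_le_power2[of "f x + real_cond_exp M G f x"] by (simp add: power2_eq_square algebra_simps)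
  have bound: "integrable M (\<lambda>x. 2 * (f x)^2 + 2 * (real_cond_exp M G f x)^2)"
    using f cond_exp_sq_integrable_le(1) by auto
  show i: "integrable M (\<lambda>x. (f x - real_cond_exp M G f x)^2)"
    using f(1) pw by (intro Bochner_Integration.integrable_bound[OF bound]) auto
  have "(\<integral>x. (f x - real_cond_exp M G f x)^2 \<partial>M) \<le> (\<integral>x. 2 * (f x)^2 + 2 * (real_cond_exp M G f x)^2 \<partial>M)"
    by (rule integral_mono[OF i bound pw])
  also have "\<dots> = 2 * (\<integral>x. (f x)^2 \<partial>M) + 2 * (\<integral>x. (real_cond_exp M G f x)^2 \<partial>M)"
    using f cond_exp_sq_integrable_le(1) by simp
  finally show "(\<integral>x. (f x - real_cond_exp M G f x)^2 \<partial>M) \<le> 4 * (\<integral>x. (f x)^2 \<partial>M)"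
    using cond_exp_sq_integrable_le(2) by simp
qed

lemma cond_exp_cond_centered: "AE x in M. real_cond_exp M G (\<lambda>x. f x - real_cond_exp M G f x) x = 0"
proof -
  interpret finite_measure_subalgebra M G using G by unfold_locales
  interpret sigma_finite_subalgebra M G by (rule finite_measure_subalgebra_is_sigma_finite) unfold_locales
  have fi: "integrable M f" by (rule square_integrable_imp_integrable[OF f])
  have ci: "integrable M (real_cond_exp M G f)" by (rule real_cond_exp_int(1)[OF fi])
  show ?thesis
    using real_cond_exp_diff[OF fi ci] real_cond_exp_F_meas[OF ci borel_measurable_cond_exp]
    by eventually_elim simp
qed

end

end

lemma integrable_mult_of_sq:
  fixes f g :: "'a \<Rightarrow> real"
  assumes "f \<in> borel_measurable M" "g \<in> borel_measurable M"
    and "integrable M (\<lambda>x. (f x)^2)" "integrable M (\<lambda>x. (g x)^2)"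
  shows "integrable M (\<lambda>x. f x * g x)"
proof (rule Bochner_Integration.integrable_bound)
  show "integrable M (\<lambda>x. (f x)^2 + (g x)^2)" using assms by auto
  have "\<bar>f x * g x\<bar> \<le> (f x)^2 + (g x)^2" for x
  proof -
    have "2 * \<bar>f x * g x\<bar> \<le> (f x)^2 + (g x)^2"
      using zero_le_power2[of "\<bar>f x\<bar> - \<bar>g x\<bar>"] by (simp add: power2_eq_square abs_mult algebra_simps)
    then show ?thesis by linarith
  qed
  then show "AE x in M. norm (f x * g x) \<le> norm ((f x)^2 + (g x)^2)" by (intro AE_I2) simp
qed (use assms in simp)

lemma integrable_sum_sq:
  fixes f :: "'i \<Rightarrow> 'a \<Rightarrow> real"
  assumes "finite A" "\<And>i. i \<in> A \<Longrightarrow> f i \<in> borel_measurable M"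
    and "\<And>i. i \<in> A \<Longrightarrow> integrable M (\<lambda>x. (f i x)^2)"
  shows "integrable M (\<lambda>x. (\<Sum>i\<in>A. f i x)^2)"
proof -
  have "(\<lambda>x. (\<Sum>i\<in>A. f i x)^2) = (\<lambda>x. \<Sum>i\<in>A. \<Sum>j\<in>A. f i x * f j x)"
    by (simp add: power2_eq_square sum_product)
  then show ?thesis using assms by (simp add: integrable_mult_of_sq)
qed

locale filtered_prob_space = prob_space +
  fixes F :: "nat \<Rightarrow> 'a measure"
  assumes subalgebra_F: "subalgebra M (F n)"
    and sets_F_mono: "n \<le> m \<Longrightarrow> sets (F n) \<subseteq> sets (F m)"
begin

lemma space_F: "space (F n) = space M"
  using subalgebra_F unfolding subalgebra_def by blast

lemma sets_F_subset: "sets (F n) \<subseteq> sets M"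
  using subalgebra_F unfolding subalgebra_def by blast

lemma measurable_F_mono: "n \<le> m \<Longrightarrow> f \<in> borel_measurable (F n) \<Longrightarrow> f \<in> borel_measurable (F m)"
  using sets_F_mono space_F unfolding measurable_def by auto

lemma measurable_F_M: "f \<in> borel_measurable (F n) \<Longrightarrow> f \<in> borel_measurable M"
  using measurable_from_subalg[OF subalgebra_F] .

lemma sigma_finite_subalgebra_F: "sigma_finite_subalgebra M (F n)"
proof -
  have "finite_measure_subalgebra M (F n)" using subalgebra_F by unfold_locales
  then show ?thesis by (rule finite_measure_subalgebra_is_sigma_finite)
qed

lemma filtered_prob_space_shift: "filtered_prob_space M (\<lambda>k. F (m + k))"
  using subalgebra_F sets_F_mono by unfold_locales auto

lemma integral_mult_cond_exp_zero:
  assumes "g \<in> borel_measurable (F n)" "d \<in> borel_measurable M"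
    and "integrable M (\<lambda>x. g x * d x)"
    and "AE x in M. real_cond_exp M (F n) d x = 0"
  shows "(\<integral>x. g x * d x \<partial>M) = 0"
proof -
  interpret sigma_finite_subalgebra M "F n" by (rule sigma_finite_subalgebra_F)
  have "(\<integral>x. g x * d x \<partial>M) = (\<integral>x. g x * real_cond_exp M (F n) d x \<partial>M)"
    using real_cond_exp_intg(2)[OF assms(3,1,2)] by simp
  also have "\<dots> = (\<integral>x. 0 \<partial>M)"
  proof (rule integral_cong_AE)
    show "(\<lambda>x. g x * real_cond_exp M (F n) d x) \<in> borel_measurable M"
      using measurable_F_M[OF assms(1)] by measurable
  qed (use assms(4) in \<open>auto elim: AE_mp\<close>)
  finally show ?thesis by simp
qed

definition L2_martingale_diff :: "(nat \<Rightarrow> 'a \<Rightarrow> real) \<Rightarrow> bool" where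
  "L2_martingale_diff D \<longleftrightarrow> (\<forall>n. D n \<in> borel_measurable (F (Suc n))
      \<and> integrable M (\<lambda>x. (D n x)^2) \<and> (AE x in M. real_cond_exp M (F n) (D n) x = 0))"

context
  fixes D :: "nat \<Rightarrow> 'a \<Rightarrow> real"
  assumes D: "L2_martingale_diff D"
begin

lemma L2_martingale_diff_measurable:
  "k < j \<Longrightarrow> D k \<in> borel_measurable (F j)" "D k \<in> borel_measurable M"
  using D measurable_F_mono[of "Suc k" j] measurable_F_M[of "D k" "Suc k"]
  unfolding L2_martingale_diff_def by auto

lemma L2_martingale_diff_sq_integrable: "integrable M (\<lambda>x. (D k x)^2)"
  using D unfolding L2_martingale_diff_def by auto

lemma L2_martingale_diff_cond_exp: "AE x in M. real_cond_exp M (F k) (D k) x = 0"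
  using D unfolding L2_martingale_diff_def by auto

lemma L2_martingale_diff_shift: "filtered_prob_space.L2_martingale_diff M (\<lambda>k. F (m + k)) (\<lambda>k. D (m + k))"
  using D filtered_prob_space_shift
  unfolding L2_martingale_diff_def filtered_prob_space.L2_martingale_diff_def[OF filtered_prob_space_shift]
  by (metis add_Suc_right)

lemma partial_sum_measurable: "j \<le> n \<Longrightarrow> (\<lambda>x. \<Sum>k<j. D k x) \<in> borel_measurable (F n)"
  using L2_martingale_diff_measurable by (intro borel_measurable_sum) auto

lemma integrable_sum_sq_L2_martingale_diff: "finite A \<Longrightarrow> integrable M (\<lambda>x. (\<Sum>k\<in>A. D k x)^2)"
  using L2_martingale_diff_measurable L2_martingale_diff_sq_integrable
  by (intro integrable_sum_sq)

lemma integral_mult_L2_martingale_diff: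
  assumes "g \<in> borel_measurable (F k)" "integrable M (\<lambda>x. (g x)^2)"
  shows "(\<integral>x. g x * D k x \<partial>M) = 0"
  by (intro integral_mult_cond_exp_zero[OF assms(1) _ _ L2_martingale_diff_cond_exp]
      integrable_mult_of_sq[OF measurable_F_M[OF assms(1)] _ assms(2)] L2_martingale_diff_measurable
      L2_martingale_diff_sq_integrable)

lemma integral_partial_sum_sq:
  "(\<integral>x. (\<Sum>k<n. D k x)^2 \<partial>M) = (\<Sum>k<n. \<integral>x. (D k x)^2 \<partial>M)"
proof (induction n)
  case (Suc n)
  define S where "S = (\<lambda>x. \<Sum>k<n. D k x)"
  have S: "S \<in> borel_measurable (F n)" "integrable M (\<lambda>x. (S x)^2)"
    unfolding S_def using partial_sum_measurable integrable_sum_sq_L2_martingale_diff by auto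
  have SD: "integrable M (\<lambda>x. S x * D n x)"
    using S measurable_F_M L2_martingale_diff_measurable L2_martingale_diff_sq_integrable
    by (intro integrable_mult_of_sq) auto
  have "(\<lambda>x. (\<Sum>k<Suc n. D k x)^2) = (\<lambda>x. (S x)^2 + 2 * (S x * D n x) + (D n x)^2)"
    unfolding S_def by (auto simp: power2_eq_square algebra_simps)
  then have "(\<integral>x. (\<Sum>k<Suc n. D k x)^2 \<partial>M)
      = (\<integral>x. (S x)^2 \<partial>M) + 2 * (\<integral>x. S x * D n x \<partial>M) + (\<integral>x. (D n x)^2 \<partial>M)"
    using S SD L2_martingale_diff_sq_integrable by simp
  then show ?case
    using Suc integral_mult_L2_martingale_diff[OF S] unfolding S_def by simp
qed simp

lemma integral_indicator_partial_sum_sq_mono: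
  assumes "j \<le> n" "A \<in> sets (F j)"
  shows "(\<integral>x. indicator A x * (\<Sum>k<j. D k x)^2 \<partial>M) \<le> (\<integral>x. indicator A x * (\<Sum>k<n. D k x)^2 \<partial>M)"
proof -
  define S where "S = (\<lambda>x. \<Sum>k<j. D k x)"
  define R where "R = (\<lambda>x. \<Sum>k\<in>{j..<n}. D k x)"
  define g where "g = (\<lambda>x. indicator A x * S x)"
  have A: "A \<in> sets M" using assms(2) sets_F_subset by blast
  have S: "integrable M (\<lambda>x. (S x)^2)" and R: "integrable M (\<lambda>x. (R x)^2)"
    unfolding S_def R_def by (auto intro: integrable_sum_sq_L2_martingale_diff)
  have RM: "R \<in> borel_measurable M" unfolding R_def using L2_martingale_diff_measurable by measurable
  have split: "(\<Sum>k<n. D k x) = S x + R x" for x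
    unfolding S_def R_def using assms(1)
    by (metis atLeast0LessThan sum.atLeastLessThan_concat zero_le)
  have gF: "g \<in> borel_measurable (F k)" if "j \<le> k" for k
  proof -
    have [measurable]: "A \<in> sets (F k)" using assms(2) sets_F_mono that by blast
    have [measurable]: "S \<in> borel_measurable (F k)" unfolding S_def using partial_sum_measurable that .
    show ?thesis unfolding g_def by measurable
  qed
  have sq_ind: "(\<lambda>x. (indicator A x * f x)^2) = (\<lambda>x. indicator A x * (f x)^2)" for f :: "'a \<Rightarrow> real"
    by (auto simp: indicator_def)
  have g: "integrable M (\<lambda>x. (g x)^2)"
    unfolding g_def sq_ind using integrable_mult_indicator[OF A S] by simp
  have gM: "g \<in> borel_measurable M" using measurable_F_M[OF gF[OF order_refl]] .
  \<comment> \<open>the later increments are orthogonal to everything known at time \<open>j\<close>\<close>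
  have cross: "(\<integral>x. g x * R x \<partial>M) = 0"
  proof -
    have "(\<integral>x. g x * R x \<partial>M) = (\<Sum>k\<in>{j..<n}. \<integral>x. g x * D k x \<partial>M)"
      unfolding R_def sum_distrib_left
      using gM g L2_martingale_diff_measurable L2_martingale_diff_sq_integrable
      by (intro Bochner_Integration.integral_sum) (auto intro: integrable_mult_of_sq)
    also have "\<dots> = 0"
      using integral_mult_L2_martingale_diff[OF gF g] by simp
    finally show ?thesis .
  qed
  have "(\<lambda>x. indicator A x * (\<Sum>k<n. D k x)^2) =
      (\<lambda>x. indicator A x * (S x)^2 + 2 * (g x * R x) + indicator A x * (R x)^2)"
    unfolding split g_def by (auto simp: indicator_def power2_eq_square algebra_simps)
  moreover have "integrable M (\<lambda>x. g x * R x)" using gM RM g R by (rule integrable_mult_of_sq)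
  ultimately have "(\<integral>x. indicator A x * (\<Sum>k<n. D k x)^2 \<partial>M) =
      (\<integral>x. indicator A x * (S x)^2 \<partial>M) + 2 * (\<integral>x. g x * R x \<partial>M) + (\<integral>x. indicator A x * (R x)^2 \<partial>M)"
    using integrable_mult_indicator[OF A S] integrable_mult_indicator[OF A R] by simp
  moreover have "(\<integral>x. indicator A x * (R x)^2 \<partial>M) \<ge> 0"
    by (rule integral_nonneg_AE) (auto simp: indicator_def)
  ultimately show ?thesis using cross unfolding S_def by simp
qed

text \<open>Split the event according to the first index \<open>j\<close> at which the partial sum
  reaches \<open>lam\<close>; this first-passage event lies in \<open>F j\<close>, so on it the second moment
  can only grow from \<open>j\<close> to \<open>n\<close>.\<close>
lemma kolmogorov_maximal_inequality:
  assumes "lam > 0"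
  shows "lam^2 * measure M (\<Union>j\<le>n. {x\<in>space M. lam \<le> \<bar>\<Sum>k<j. D k x\<bar>})
      \<le> (\<Sum>k<n. \<integral>x. (D k x)^2 \<partial>M)"
proof -
  define S where "S = (\<lambda>j x. \<Sum>k<j. D k x)"
  define A where "A = (\<lambda>j. {x\<in>space M. lam \<le> \<bar>S j x\<bar> \<and> (\<forall>i<j. \<bar>S i x\<bar> < lam)})"
  have S_F: "S i \<in> borel_measurable (F j)" if "i \<le> j" for i j
    unfolding S_def using partial_sum_measurable[OF that] .
  have S_sq: "integrable M (\<lambda>x. (S j x)^2)" for j
    unfolding S_def by (simp add: integrable_sum_sq_L2_martingale_diff)
  have A_F: "A j \<in> sets (F j)" for j
  proof -
    have "A j = {x\<in>space (F j). lam \<le> \<bar>S j x\<bar>} \<inter> (\<Inter>i<j. {x\<in>space (F j). \<bar>S i x\<bar> < lam})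
        \<inter> space (F j)"
      unfolding A_def space_F by auto
    moreover have "{x\<in>space (F j). \<bar>S i x\<bar> < lam} \<in> sets (F j)" if "i \<le> j" for i
      using S_F[OF that] by measurable
    ultimately show ?thesis
      using S_F[OF order_refl] by (auto intro!: sets.Int sets.finite_INT simp del: Int_iff)
  qed
  have A_M: "A j \<in> sets M" for j using A_F sets_F_subset by blast
  have disj: "disjoint_family A"
    unfolding disjoint_family_on_def
  proof (intro ballI impI)
    fix i j :: nat assume "i \<noteq> j"
    then consider "i < j" | "j < i" by linarith
    then show "A i \<inter> A j = {}" by cases (auto simp: A_def)
  qed
  have E: "(\<Union>j\<le>n. {x\<in>space M. lam \<le> \<bar>S j x\<bar>}) = (\<Union>j\<le>n. A j)"
  proof (intro equalityI subsetI)
    fix x assume "x \<in> (\<Union>j\<le>n. {x\<in>space M. lam \<le> \<bar>S j x\<bar>})"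
    then obtain j where j: "j \<le> n" "lam \<le> \<bar>S j x\<bar>" "x \<in> space M" by auto
    define j0 where "j0 = (LEAST j. lam \<le> \<bar>S j x\<bar>)"
    have "lam \<le> \<bar>S j0 x\<bar>" unfolding j0_def by (rule LeastI[of _ j]) (use j in simp)
    moreover have "\<bar>S i x\<bar> < lam" if "i < j0" for i
      using not_less_Least[of i "\<lambda>j. lam \<le> \<bar>S j x\<bar>"] that unfolding j0_def by simp
    ultimately have "x \<in> A j0" unfolding A_def using j by simp
    moreover have "j0 \<le> n" unfolding j0_def using j Least_le[of "\<lambda>j. lam \<le> \<bar>S j x\<bar>" j] by simp
    ultimately show "x \<in> (\<Union>j\<le>n. A j)" by blast
  qed (auto simp: A_def)
  have "lam^2 * measure M (\<Union>j\<le>n. A j) = (\<Sum>j\<le>n. lam^2 * measure M (A j))"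
    using disj A_M
    by (simp add: finite_measure_finite_Union[of "{..n}" A] disjoint_family_on_mono[OF _ disj] sum_distrib_left image_subset_iff)
  also have "\<dots> \<le> (\<Sum>j\<le>n. \<integral>x. indicator (A j) x * (S j x)^2 \<partial>M)"
  proof (rule sum_mono)
    fix j
    have "lam^2 * indicator (A j) x \<le> indicator (A j) x * (S j x)^2" for x
      using power_mono[of lam "\<bar>S j x\<bar>" 2] \<open>lam > 0\<close> by (auto simp: A_def indicator_def)
    then have "(\<integral>x. lam^2 * indicator (A j) x \<partial>M) \<le> (\<integral>x. indicator (A j) x * (S j x)^2 \<partial>M)"
      using A_M integrable_mult_indicator[OF A_M S_sq]
      by (intro integral_mono) (auto simp: less_top[symmetric])
    then show "lam^2 * measure M (A j) \<le> (\<integral>x. indicator (A j) x * (S j x)^2 \<partial>M)"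
      using A_M by simp
  qed
  also have "\<dots> \<le> (\<Sum>j\<le>n. \<integral>x. indicator (A j) x * (S n x)^2 \<partial>M)"
    unfolding S_def by (intro sum_mono integral_indicator_partial_sum_sq_mono[OF _ A_F]) simp
  also have "\<dots> = (\<integral>x. (\<Sum>j\<le>n. indicator (A j) x * (S n x)^2) \<partial>M)"
    by (rule Bochner_Integration.integral_sum[symmetric]) (use integrable_mult_indicator[OF A_M S_sq] in simp)
  also have "\<dots> = (\<integral>x. indicator (\<Union>j\<le>n. A j) x * (S n x)^2 \<partial>M)"
    by (simp only: indicator_UN_disjoint[OF finite_atMost disjoint_family_on_mono[OF subset_UNIV disj]]
        sum_distrib_right)
  also have "\<dots> \<le> (\<integral>x. (S n x)^2 \<partial>M)"
  proof (rule integral_mono)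
    have "(\<Union>j\<le>n. A j) \<in> sets M" using A_M by auto
    from integrable_mult_indicator[OF this S_sq]
    show "integrable M (\<lambda>x. indicator (\<Union>j\<le>n. A j) x * (S n x)^2)" by simp
  qed (auto simp: S_sq indicator_def)
  also have "\<dots> = (\<Sum>k<n. \<integral>x. (D k x)^2 \<partial>M)"
    unfolding S_def by (rule integral_partial_sum_sq)
  finally show ?thesis using E by (simp add: S_def)
qed

end

context
  fixes D :: "nat \<Rightarrow> 'a \<Rightarrow> real"
  assumes D: "L2_martingale_diff D"
    and sum_var: "summable (\<lambda>k. \<integral>x. (D k x)^2 \<partial>M)"
begin

lemma measure_partial_sums_exceed_le:
  assumes "c > 0"
  shows "measure M {x\<in>space M. \<exists>j. c \<le> \<bar>\<Sum>k<j. D k x\<bar>} \<le> (\<Sum>k. \<integral>x. (D k x)^2 \<partial>M) / c^2"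
proof -
  define H where "H = (\<lambda>n. \<Union>j\<le>n. {x\<in>space M. c \<le> \<bar>\<Sum>k<j. D k x\<bar>})"
  have H_M: "H n \<in> sets M" for n
    unfolding H_def using L2_martingale_diff_measurable(2)[OF D] by measurable
  have "measure M (H n) \<le> (\<Sum>k. \<integral>x. (D k x)^2 \<partial>M) / c^2" for n
  proof -
    have "c^2 * measure M (H n) \<le> (\<Sum>k<n. \<integral>x. (D k x)^2 \<partial>M)"
      unfolding H_def by (rule kolmogorov_maximal_inequality[OF D assms])
    also have "\<dots> \<le> (\<Sum>k. \<integral>x. (D k x)^2 \<partial>M)"
      by (rule sum_le_suminf[OF sum_var]) auto
    finally show ?thesis using assms by (simp add: field_simps)
  qed
  moreover have "(\<lambda>n. measure M (H n)) \<longlonglongrightarrow> measure M (\<Union>n. H n)"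
    using H_M by (intro finite_Lim_measure_incseq) (auto intro!: incseq_SucI simp: H_def atMost_Suc)
  moreover have "(\<Union>n. H n) = {x\<in>space M. \<exists>j. c \<le> \<bar>\<Sum>k<j. D k x\<bar>}"
    unfolding H_def by blast
  ultimately show ?thesis by (metis LIMSEQ_le_const2)
qed

text \<open>Applied to the shifted sequences, the previous bound shows that the event
  "every tail of the series oscillates by at least \<open>c\<close>" has probability at most the
  tail of \<open>\<Sum>k. \<integral>x. (D k x)^2 \<partial>M\<close>, hence zero.\<close>
lemma AE_small_tail_partial_sums:
  assumes "c > 0"
  shows "AE x in M. \<exists>N. \<forall>j. \<bar>\<Sum>k<j. D (N + k) x\<bar> < c"
proof -
  define Bad where "Bad = {x\<in>space M. \<forall>N. \<exists>j. c \<le> \<bar>\<Sum>k<j. D (N + k) x\<bar>}"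
  have Bad_M: "Bad \<in> sets M"
    unfolding Bad_def using L2_martingale_diff_measurable(2)[OF D] by measurable
  have "measure M Bad \<le> (\<Sum>k. \<integral>x. (D (k + N) x)^2 \<partial>M) / c^2" for N
  proof -
    have "measure M Bad \<le> measure M {x\<in>space M. \<exists>j. c \<le> \<bar>\<Sum>k<j. D (N + k) x\<bar>}"
      using L2_martingale_diff_measurable(2)[OF D]
      by (intro finite_measure_mono) (auto simp: Bad_def)
    also have "\<dots> \<le> (\<Sum>k. \<integral>x. (D (N + k) x)^2 \<partial>M) / c^2"
    proof (rule filtered_prob_space.measure_partial_sums_exceed_le[OF filtered_prob_space_shift
          L2_martingale_diff_shift[OF D] _ assms])
      show "summable (\<lambda>k. \<integral>x. (D (N + k) x)^2 \<partial>M)"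
        using summable_ignore_initial_segment[OF sum_var, of N] by (simp add: add.commute)
    qed
    also have "(\<lambda>k. \<integral>x. (D (N + k) x)^2 \<partial>M) = (\<lambda>k. \<integral>x. (D (k + N) x)^2 \<partial>M)"
      by (simp add: add.commute)
    finally show ?thesis .
  qed
  moreover have "(\<lambda>N. (\<Sum>k. \<integral>x. (D (k + N) x)^2 \<partial>M) / c^2) \<longlonglongrightarrow> 0 / c^2"
    by (intro tendsto_divide suminf_exist_split2[OF sum_var] tendsto_const) (use assms in simp)
  ultimately have "measure M Bad \<le> 0" by (simp add: LIMSEQ_le_const)
  then have "Bad \<in> null_sets M"
    using Bad_M by (intro null_setsI) (simp_all add: measure_le_0_iff emeasure_eq_measure)
  then show ?thesis
    by (rule AE_not_in[THEN AE_mp]) (auto simp: Bad_def not_le intro!: AE_I2)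
qed

lemma AE_summable_L2_martingale_diff: "AE x in M. summable (\<lambda>k. D k x)"
proof -
  have "AE x in M. \<forall>r::nat. \<exists>N. \<forall>j. \<bar>\<Sum>k<j. D (N + k) x\<bar> < inverse (real (Suc r))"
    by (subst AE_all_countable) (simp add: AE_small_tail_partial_sums)
  then show ?thesis
  proof (rule AE_mp, intro AE_I2 impI summable_of_small_tails)
    fix x and c :: real
    assume "\<forall>r::nat. \<exists>N. \<forall>j. \<bar>\<Sum>k<j. D (N + k) x\<bar> < inverse (real (Suc r))" "c > 0"
    moreover obtain r where "inverse (real (Suc r)) < c"
      using reals_Archimedean[OF \<open>c > 0\<close>] by blast
    ultimately show "\<exists>N. \<forall>j. \<bar>\<Sum>k<j. D (N + k) x\<bar> < c" by (meson less_trans)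
  qed
qed

end

text \<open>Via almost sure convergence of \<open>\<Sum>k. X k x / (k + 1)\<close> and Kronecker's lemma.\<close>
lemma L2_martingale_diff_slln:
  assumes X: "L2_martingale_diff X"
    and sum_var: "summable (\<lambda>n. (\<integral>x. (X n x)^2 \<partial>M) / (real n)^2)"
  shows "AE x in M. (\<lambda>n. (\<Sum>k<n. X k x) / real n) \<longlonglongrightarrow> 0"
proof -
  define D where "D = (\<lambda>k x. X k x / real (Suc k))"
  have D_sq: "(\<integral>x. (D n x)^2 \<partial>M) = (\<integral>x. (X n x)^2 \<partial>M) / (real (Suc n))^2" for n
    unfolding D_def by (simp add: power_divide)
  have "L2_martingale_diff D"
    unfolding L2_martingale_diff_def
  proof (intro allI conjI)
    fix n
    interpret sigma_finite_subalgebra M "F n" by (rule sigma_finite_subalgebra_F)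
    have Xi: "integrable M (X n)"
      using square_integrable_imp_integrable L2_martingale_diff_measurable(2)[OF X]
        L2_martingale_diff_sq_integrable[OF X] by blast
    show "D n \<in> borel_measurable (F (Suc n))"
      unfolding D_def using L2_martingale_diff_measurable(1)[OF X, of n "Suc n"] by measurable
    show "integrable M (\<lambda>x. (D n x)^2)"
      unfolding D_def power_divide using L2_martingale_diff_sq_integrable[OF X] by simp
    show "AE x in M. real_cond_exp M (F n) (D n) x = 0"
      using real_cond_exp_cdiv[OF Xi, of "real (Suc n)"] L2_martingale_diff_cond_exp[OF X, of n]
      unfolding D_def by eventually_elim simp
  qed
  moreover have "summable (\<lambda>k. \<integral>x. (D k x)^2 \<partial>M)"
  proof (rule summable_comparison_test'[OF sum_var, of 1])
    fix n :: nat assume "n \<ge> 1"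
    then show "norm (\<integral>x. (D n x)^2 \<partial>M) \<le> (\<integral>x. (X n x)^2 \<partial>M) / (real n)^2"
      unfolding D_sq by (auto intro!: divide_left_mono power_mono)
  qed
  ultimately have "AE x in M. summable (\<lambda>k. D k x)"
    by (rule AE_summable_L2_martingale_diff)
  then show ?thesis
    by eventually_elim (rule kronecker_lemma, simp add: D_def)
qed

lemma AE_average_cond_centered_tendsto_zero:
  assumes meas: "\<And>n. f n \<in> borel_measurable (F (Suc n))"
    and sq: "\<And>n. integrable M (\<lambda>x. (f n x)^2)"
    and sum_sq: "summable (\<lambda>n. (\<integral>x. (f n x)^2 \<partial>M) / (real n)^2)"
  shows "AE x in M. (\<lambda>n. (\<Sum>k<n. f k x - real_cond_exp M (F k) (f k) x) / real n) \<longlonglongrightarrow> 0"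
proof (rule L2_martingale_diff_slln)
  have f_M: "f n \<in> borel_measurable M" for n using measurable_F_M[OF meas] .
  note centered = cond_centered_sq_integrable_le[OF subalgebra_F f_M sq]
  show "L2_martingale_diff (\<lambda>k x. f k x - real_cond_exp M (F k) (f k) x)"
    unfolding L2_martingale_diff_def
  proof (intro allI conjI)
    fix n
    have "real_cond_exp M (F n) (f n) \<in> borel_measurable (F (Suc n))"
      by (rule measurable_F_mono[OF _ borel_measurable_cond_exp]) simp
    then show "(\<lambda>x. f n x - real_cond_exp M (F n) (f n) x) \<in> borel_measurable (F (Suc n))"
      using meas[of n] by measurable
  qed (use centered cond_exp_cond_centered[OF subalgebra_F f_M sq] in auto)
  show "summable (\<lambda>n. (\<integral>x. (f n x - real_cond_exp M (F n) (f n) x)^2 \<partial>M) / (real n)^2)"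
  proof (rule summable_comparison_test'[OF summable_mult[OF sum_sq, of 4]])
    fix n :: nat
    show "norm ((\<integral>x. (f n x - real_cond_exp M (F n) (f n) x)^2 \<partial>M) / (real n)^2)
        \<le> 4 * ((\<integral>x. (f n x)^2 \<partial>M) / (real n)^2)"
      using divide_right_mono[OF centered(2)[of n], of "(real n)^2"] by simp
  qed
qed

end

section \<open>Histories and the quadratic Lyapunov function\<close>

lemma sets_gen_sigma:
  "sets (gen_sigma M Xs) = sigma_sets (space M) {X -` A \<inter> space M | X A. X \<in> Xs \<and> A \<in> sets borel}"
  unfolding gen_sigma_def by (rule sets_measure_of) blast

lemma space_gen_sigma: "space (gen_sigma M Xs) = space M"
  unfolding gen_sigma_def by (rule space_measure_of_conv)

lemma subalgebra_gen_sigma: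
  assumes "\<And>X. X \<in> Xs \<Longrightarrow> X \<in> borel_measurable M"
  shows "subalgebra M (gen_sigma M Xs)"
  unfolding subalgebra_def space_gen_sigma sets_gen_sigma
  using assms by (auto intro!: sets.sigma_sets_subset intro: measurable_sets)

lemma sets_gen_sigma_mono: "Xs \<subseteq> Ys \<Longrightarrow> sets (gen_sigma M Xs) \<subseteq> sets (gen_sigma M Ys)"
  unfolding sets_gen_sigma by (intro sigma_sets_subseteq) blast

lemma measurable_gen_sigma: "X \<in> Xs \<Longrightarrow> X \<in> borel_measurable (gen_sigma M Xs)"
  by (intro measurableI) (auto simp: sets_gen_sigma space_gen_sigma intro: sigma_sets.Basic)

lemma measurable_hist_Q: "\<tau> \<le> t \<Longrightarrow> k \<in> {1..K} \<Longrightarrow> Q \<tau> k \<in> borel_measurable (hist M K Q p t)"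
  unfolding hist_def by (rule measurable_gen_sigma) blast

lemma measurable_hist_p: "\<tau> < t \<Longrightarrow> p \<tau> \<in> borel_measurable (hist M K Q p t)"
  unfolding hist_def by (rule measurable_gen_sigma) blast

lemma measurable_hist_lyap:
  "\<tau> \<le> t \<Longrightarrow> (\<lambda>x. lyap K w (\<lambda>k. Q \<tau> k x)) \<in> borel_measurable (hist M K Q p t)"
  unfolding lyap_def
  by (intro borel_measurable_times borel_measurable_sum borel_measurable_power) (auto intro: measurable_hist_Q)

lemma filtered_prob_space_hist:
  assumes "prob_space M" "\<And>t k. Q t k \<in> borel_measurable M" "\<And>t. p t \<in> borel_measurable M"
  shows "filtered_prob_space M (hist M K Q p)"
proof -
  interpret prob_space M by fact
  show ?thesis
  proof
    show "subalgebra M (hist M K Q p t)" for t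
      unfolding hist_def using assms by (intro subalgebra_gen_sigma) auto
    show "sets (hist M K Q p n) \<subseteq> sets (hist M K Q p m)" if "n \<le> m" for n m
      unfolding hist_def using that by (intro sets_gen_sigma_mono) force
  qed
qed

lemma half_diff_sq_sq_le:
  fixes w a b :: real
  shows "((1/2) * w * (a^2 - b^2))^2 \<le> w^2 * (2 * b^2 + 2 * (b^2 * (a - b)^4) + (a - b)^4)"
proof -
  define d where "d = a - b"
  have "(2 * b + d)^2 \<le> 8 * b^2 + 2 * d^2"
    using zero_le_power2[of "2 * b - d"] by (simp add: power2_eq_square algebra_simps)
  have "2 * d^2 \<le> 1 + d^4"
    using zero_le_power2[of "d^2 - 1"] by (simp add: power2_eq_square power4_eq_xxxx algebra_simps)
  then have "d^2 \<le> 1 + d^4" using zero_le_power2[of d] by linarith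
  have "d^2 * (2 * b + d)^2 \<le> d^2 * (8 * b^2 + 2 * d^2)"
    by (rule mult_left_mono) (fact, simp)
  also have "\<dots> = 8 * (b^2 * d^2) + 2 * d^4"
    by (simp add: algebra_simps power4_eq_xxxx power2_eq_square)
  also have "\<dots> \<le> 8 * (b^2 * (1 + d^4)) + 2 * d^4"
    using mult_left_mono[OF \<open>d^2 \<le> 1 + d^4\<close>, of "b^2"] by simp
  also have "\<dots> \<le> 4 * (2 * b^2 + 2 * (b^2 * d^4) + d^4)"
    using zero_le_power2[of "d^2"] by (simp add: algebra_simps power4_eq_xxxx power2_eq_square)
  finally have bound: "d^2 * (2 * b + d)^2 \<le> 4 * (2 * b^2 + 2 * (b^2 * d^4) + d^4)" .
  have "((1/2) * w * (a^2 - b^2))^2 = w^2 / 4 * (d^2 * (2 * b + d)^2)"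
    unfolding d_def by (simp add: power2_eq_square algebra_simps)
  also have "\<dots> \<le> w^2 / 4 * (4 * (2 * b^2 + 2 * (b^2 * d^4) + d^4))"
    using bound by (rule mult_left_mono) simp
  also have "\<dots> = w^2 * (2 * b^2 + 2 * (b^2 * d^4) + d^4)"
    by simp
  finally show ?thesis unfolding d_def .
qed

lemma lyap_diff_sq_le:
  "(lyap K w a - lyap K w b)^2
    \<le> real K * (\<Sum>k=1..K. (w k)^2 * (2 * (b k)^2 + 2 * ((b k)^2 * (a k - b k)^4) + (a k - b k)^4))"
proof -
  have "lyap K w a - lyap K w b = (\<Sum>k=1..K. (1/2) * w k * ((a k)^2 - (b k)^2))"
    unfolding lyap_def by (simp add: sum_subtractf[symmetric] sum_distrib_left algebra_simps)
  then have "(lyap K w a - lyap K w b)^2 \<le> (\<Sum>k=1..K. ((1/2) * w k * ((a k)^2 - (b k)^2))^2) * card {1..K}"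
    using sum_squared_le_sum_of_squares[of "\<lambda>k. (1/2) * w k * ((a k)^2 - (b k)^2)" "{1..K}"] by simp
  also have "\<dots> \<le> (\<Sum>k=1..K. (w k)^2 * (2 * (b k)^2 + 2 * ((b k)^2 * (a k - b k)^4) + (a k - b k)^4)) * card {1..K}"
    by (intro mult_right_mono sum_mono half_diff_sq_sq_le) simp
  finally show ?thesis by (simp add: mult.commute)
qed

lemma lyap_nonneg:
  assumes "\<And>k. k \<in> {1..K} \<Longrightarrow> w k > 0"
  shows "lyap K w q \<ge> 0"
proof -
  have "0 \<le> (\<Sum>k=1..K. w k * (q k)^2)"
    using assms by (intro sum_nonneg mult_nonneg_nonneg) (auto intro: less_imp_le)
  then show ?thesis unfolding lyap_def by simp
qed

context prob_space begin

lemma integral_mult_fourth_le: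
  fixes h d :: "'a \<Rightarrow> real" and G :: "'a measure"
  assumes G: "subalgebra M G" and h: "h \<in> borel_measurable G" "\<And>x. h x \<ge> 0" "integrable M h"
    and d: "d \<in> borel_measurable M" and "D \<ge> 0"
    and fourth: "AE x in M. nn_cond_exp M G (\<lambda>y. ennreal ((d y)^4)) x \<le> ennreal D"
  shows "integrable M (\<lambda>x. h x * (d x)^4)" and "(\<integral>x. h x * (d x)^4 \<partial>M) \<le> D * (\<integral>x. h x \<partial>M)"
proof -
  interpret finite_measure_subalgebra M G using G by unfold_locales
  interpret sigma_finite_subalgebra M G by (rule finite_measure_subalgebra_is_sigma_finite) unfold_locales
  have h_M: "h \<in> borel_measurable M" using measurable_from_subalg[OF G h(1)] .
  have "(\<integral>\<^sup>+x. ennreal (h x * (d x)^4) \<partial>M) = (\<integral>\<^sup>+x. ennreal (h x) * ennreal ((d x)^4) \<partial>M)"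
    using h(2) by (simp add: ennreal_mult)
  also have "\<dots> = (\<integral>\<^sup>+x. ennreal (h x) * nn_cond_exp M G (\<lambda>y. ennreal ((d y)^4)) x \<partial>M)"
    by (rule nn_cond_exp_intg[symmetric]) (use h(1) d in auto)
  also have "\<dots> \<le> (\<integral>\<^sup>+x. ennreal (h x) * ennreal D \<partial>M)"
    by (rule nn_integral_mono_AE) (use fourth in \<open>auto elim!: AE_mp intro!: mult_left_mono\<close>)
  also have "\<dots> = ennreal D * (\<integral>\<^sup>+x. ennreal (h x) \<partial>M)"
    by (subst nn_integral_multc) (use h_M in \<open>auto simp: mult.commute\<close>)
  also have "\<dots> = ennreal (D * (\<integral>x. h x \<partial>M))"
    using nn_integral_eq_integral[OF h(3)] h(2) \<open>D \<ge> 0\<close> by (simp add: ennreal_mult)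
  finally have nn: "(\<integral>\<^sup>+x. ennreal (h x * (d x)^4) \<partial>M) \<le> ennreal (D * (\<integral>x. h x \<partial>M))" .
  show i: "integrable M (\<lambda>x. h x * (d x)^4)"
  proof (rule integrableI_bounded)
    show "(\<integral>\<^sup>+x. ennreal (norm (h x * (d x)^4)) \<partial>M) < \<infinity>"
      using nn h(2) by (simp add: abs_mult le_less_trans)
  qed (use h_M d in measurable)
  show "(\<integral>x. h x * (d x)^4 \<partial>M) \<le> D * (\<integral>x. h x \<partial>M)"
    using nn nn_integral_eq_integral[OF i] h(2) \<open>D \<ge> 0\<close>
    by (simp add: ennreal_le_iff integral_nonneg_AE)
qed

lemma lyap_increment_sq_integrable_le:
  fixes Q :: "nat \<Rightarrow> nat \<Rightarrow> 'a \<Rightarrow> real"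
  assumes Q_meas: "\<And>t k. Q t k \<in> borel_measurable M"
    and Q_sq: "\<And>k. k \<in> {1..K} \<Longrightarrow> integrable M (\<lambda>x. (Q t k x)^2)"
    and "D \<ge> 0"
    and fourth: "\<And>k. k \<in> {1..K} \<Longrightarrow>
        AE x in M. nn_cond_exp M (qsig M K Q t) (\<lambda>y. ennreal ((Q (Suc t) k y - Q t k y)^4)) x \<le> ennreal D"
  shows "integrable M (\<lambda>x. (lyap K w (\<lambda>k. Q (Suc t) k x) - lyap K w (\<lambda>k. Q t k x))^2)"
    and "(\<integral>x. (lyap K w (\<lambda>k. Q (Suc t) k x) - lyap K w (\<lambda>k. Q t k x))^2 \<partial>M)
      \<le> real K * (\<Sum>k=1..K. (w k)^2 * ((2 + 2 * D) * (\<integral>x. (Q t k x)^2 \<partial>M) + D))"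
proof -
  define d where "d = (\<lambda>k x. Q (Suc t) k x - Q t k x)"
  define h where "h = (\<lambda>k x. (w k)^2 * (2 * (Q t k x)^2 + 2 * ((Q t k x)^2 * (d k x)^4) + (d k x)^4))"
  have G: "subalgebra M (qsig M K Q t)"
    unfolding qsig_def using Q_meas by (intro subalgebra_gen_sigma) auto
  have d_M: "d k \<in> borel_measurable M" for k unfolding d_def using Q_meas by measurable
  have QG: "(\<lambda>x. (Q t k x)^2) \<in> borel_measurable (qsig M K Q t)" if "k \<in> {1..K}" for k
    unfolding qsig_def using that by (intro borel_measurable_power measurable_gen_sigma) auto
  have fourth': "AE x in M. nn_cond_exp M (qsig M K Q t) (\<lambda>y. ennreal ((d k y)^4)) x \<le> ennreal D"
    if "k \<in> {1..K}" for k
    unfolding d_def by (rule fourth[OF that])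
  have h: "integrable M (h k) \<and> (\<integral>x. h k x \<partial>M) \<le> (w k)^2 * ((2 + 2 * D) * (\<integral>x. (Q t k x)^2 \<partial>M) + D)"
    if "k \<in> {1..K}" for k
  proof -
    note mixed = integral_mult_fourth_le[OF G QG[OF that] _ Q_sq[OF that] d_M \<open>D \<ge> 0\<close> fourth'[OF that]]
    note pure = integral_mult_fourth_le[OF G borel_measurable_const[of 1] _ _ d_M \<open>D \<ge> 0\<close> fourth'[OF that],
        simplified]
    have "(\<integral>x. h k x \<partial>M) = (w k)^2 * (2 * (\<integral>x. (Q t k x)^2 \<partial>M)
        + 2 * (\<integral>x. (Q t k x)^2 * (d k x)^4 \<partial>M) + (\<integral>x. (d k x)^4 \<partial>M))"
      unfolding h_def using Q_sq[OF that] mixed pure by simp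
    also have "\<dots> \<le> (w k)^2 * ((2 + 2 * D) * (\<integral>x. (Q t k x)^2 \<partial>M) + D)"
      using mixed(2) pure(2) by (intro mult_left_mono) (simp_all add: algebra_simps prob_space)
    finally show ?thesis unfolding h_def using Q_sq[OF that] mixed pure by simp
  qed
  have pointwise: "(lyap K w (\<lambda>k. Q (Suc t) k x) - lyap K w (\<lambda>k. Q t k x))^2 \<le> real K * (\<Sum>k=1..K. h k x)" for x
    unfolding h_def d_def by (rule lyap_diff_sq_le)
  have bound: "integrable M (\<lambda>x. real K * (\<Sum>k=1..K. h k x))"
    using h by (intro Bochner_Integration.integrable_mult_right Bochner_Integration.integrable_sum) auto
  show i: "integrable M (\<lambda>x. (lyap K w (\<lambda>k. Q (Suc t) k x) - lyap K w (\<lambda>k. Q t k x))^2)"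
  proof (rule Bochner_Integration.integrable_bound[OF bound])
    show "(\<lambda>x. (lyap K w (\<lambda>k. Q (Suc t) k x) - lyap K w (\<lambda>k. Q t k x))^2) \<in> borel_measurable M"
      unfolding lyap_def using Q_meas by measurable
  qed (use pointwise order_trans[OF _ abs_ge_self] in \<open>auto intro!: AE_I2\<close>)
  have "(\<integral>x. (lyap K w (\<lambda>k. Q (Suc t) k x) - lyap K w (\<lambda>k. Q t k x))^2 \<partial>M)
      \<le> (\<integral>x. real K * (\<Sum>k=1..K. h k x) \<partial>M)"
    by (rule integral_mono[OF i bound pointwise])
  also have "\<dots> \<le> real K * (\<Sum>k=1..K. (w k)^2 * ((2 + 2 * D) * (\<integral>x. (Q t k x)^2 \<partial>M) + D))"
    using h by (simp add: Bochner_Integration.integral_sum) (intro mult_left_mono sum_mono, auto)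
  finally show "(\<integral>x. (lyap K w (\<lambda>k. Q (Suc t) k x) - lyap K w (\<lambda>k. Q t k x))^2 \<partial>M)
      \<le> real K * (\<Sum>k=1..K. (w k)^2 * ((2 + 2 * D) * (\<integral>x. (Q t k x)^2 \<partial>M) + D))" .
qed

lemma summable_lyap_increment_sq:
  fixes Q :: "nat \<Rightarrow> nat \<Rightarrow> 'a \<Rightarrow> real"
  assumes Q_meas: "\<And>t k. Q t k \<in> borel_measurable M"
    and Q_sq: "\<And>t k. k \<in> {1..K} \<Longrightarrow> integrable M (\<lambda>x. (Q t k x)^2)"
    and Q_sum: "\<And>k. k \<in> {1..K} \<Longrightarrow> summable (\<lambda>t. (\<integral>x. (Q t k x)^2 \<partial>M) / (real t)^2)"
    and "D \<ge> 0"
    and fourth: "\<And>t k. k \<in> {1..K} \<Longrightarrow>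
        AE x in M. nn_cond_exp M (qsig M K Q t) (\<lambda>y. ennreal ((Q (Suc t) k y - Q t k y)^4)) x \<le> ennreal D"
  shows "summable (\<lambda>t. (\<integral>x. (lyap K w (\<lambda>k. Q (Suc t) k x) - lyap K w (\<lambda>k. Q t k x))^2 \<partial>M) / (real t)^2)"
proof (rule summable_comparison_test')
  define g where "g = (\<lambda>t. real K * (\<Sum>k=1..K. (w k)^2 * ((2 + 2 * D) * ((\<integral>x. (Q t k x)^2 \<partial>M) / (real t)^2)
      + D * inverse ((real t)^2))))"
  show "summable g"
    unfolding g_def using Q_sum inverse_power_summable[of 2, where 'a=real]
    by (intro summable_mult summable_sum summable_add) auto
  fix t :: nat
  have "(\<integral>x. (lyap K w (\<lambda>k. Q (Suc t) k x) - lyap K w (\<lambda>k. Q t k x))^2 \<partial>M) / (real t)^2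
      \<le> real K * (\<Sum>k=1..K. (w k)^2 * ((2 + 2 * D) * (\<integral>x. (Q t k x)^2 \<partial>M) + D)) / (real t)^2"
    using lyap_increment_sq_integrable_le(2)[OF Q_meas Q_sq \<open>D \<ge> 0\<close> fourth]
    by (rule divide_right_mono[OF _ zero_le_power2])
  also have "\<dots> = g t"
    unfolding g_def sum_divide_distrib by (simp add: divide_inverse algebra_simps sum_distrib_left)
  finally show "norm ((\<integral>x. (lyap K w (\<lambda>k. Q (Suc t) k x) - lyap K w (\<lambda>k. Q t k x))^2 \<partial>M) / (real t)^2) \<le> g t"
    by simp
qed

end

lemma AE_average_lyap_increment_cond_centered:
  fixes Q :: "nat \<Rightarrow> nat \<Rightarrow> 'a \<Rightarrow> real"
  assumes "prob_space M"
    and Q_meas: "\<And>t k. Q t k \<in> borel_measurable M" and p_meas: "\<And>t. p t \<in> borel_measurable M"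
    and Q_sq: "\<And>t k. k \<in> {1..K} \<Longrightarrow> integrable M (\<lambda>x. (Q t k x)^2)"
    and Q_sum: "\<And>k. k \<in> {1..K} \<Longrightarrow> summable (\<lambda>t. (\<integral>x. (Q t k x)^2 \<partial>M) / (real t)^2)"
    and "D \<ge> 0"
    and fourth: "\<And>t k. k \<in> {1..K} \<Longrightarrow>
        AE x in M. nn_cond_exp M (qsig M K Q t) (\<lambda>y. ennreal ((Q (Suc t) k y - Q t k y)^4)) x \<le> ennreal D"
  shows "AE x in M. (\<lambda>n. (\<Sum>t<n. lyap K w (\<lambda>k. Q (Suc t) k x) - lyap K w (\<lambda>k. Q t k x)
      - real_cond_exp M (hist M K Q p t) (\<lambda>y. lyap K w (\<lambda>k. Q (Suc t) k y) - lyap K w (\<lambda>k. Q t k y)) x)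
      / real n) \<longlonglongrightarrow> 0"
proof -
  interpret filtered_prob_space M "hist M K Q p"
    by (rule filtered_prob_space_hist[OF assms(1) Q_meas p_meas])
  show ?thesis
  proof (rule AE_average_cond_centered_tendsto_zero)
    show "(\<lambda>x. lyap K w (\<lambda>k. Q (Suc n) k x) - lyap K w (\<lambda>k. Q n k x)) \<in> borel_measurable (hist M K Q p (Suc n))"
      for n by (intro borel_measurable_diff measurable_hist_lyap) auto
    show "integrable M (\<lambda>x. (lyap K w (\<lambda>k. Q (Suc n) k x) - lyap K w (\<lambda>k. Q n k x))^2)" for n
      by (rule lyap_increment_sq_integrable_le(1)[OF Q_meas Q_sq \<open>D \<ge> 0\<close> fourth])
    show "summable (\<lambda>n. (\<integral>x. (lyap K w (\<lambda>k. Q (Suc n) k x) - lyap K w (\<lambda>k. Q n k x))^2 \<partial>M) / (real n)^2)"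
      by (rule summable_lyap_increment_sq[OF Q_meas Q_sq Q_sum \<open>D \<ge> 0\<close> fourth])
  qed
qed

section \<open>Time averages of the drift inequality\<close>

lemma limsup_penalty_average_le:
  fixes P A r :: "nat \<Rightarrow> real"
  assumes "V > 0" "\<epsilon> \<ge> 0" "\<And>n. A n \<ge> 0"
    and bound: "\<And>n. n > 0 \<Longrightarrow> V * P n + \<epsilon> * A n \<le> B + V * ps + r n"
    and r: "r \<longlonglongrightarrow> 0"
  shows "limsup (\<lambda>n. ereal (P n)) \<le> ereal (ps + B / V)"
proof -
  have "P n \<le> ps + B / V + r n / V" if "n > 0" for n
  proof -
    have "V * P n \<le> B + V * ps + r n"
      using bound[OF that] mult_nonneg_nonneg[OF assms(2) assms(3)[of n]] by linarith
    then show ?thesis using \<open>V > 0\<close> by (simp add: field_simps)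
  qed
  then have "limsup (\<lambda>n. ereal (P n)) \<le> limsup (\<lambda>n. ereal (ps + B / V + r n / V))"
    by (intro Limsup_mono) (auto simp: eventually_sequentially intro!: exI[of _ 1])
  also have "\<dots> = ereal (ps + B / V)"
  proof (rule lim_imp_Limsup)
    have "(\<lambda>n. ps + B / V + r n / V) \<longlonglongrightarrow> ps + B / V + 0 / V"
      by (intro tendsto_intros r) (use \<open>V > 0\<close> in simp)
    then show "(\<lambda>n. ereal (ps + B / V + r n / V)) \<longlonglongrightarrow> ereal (ps + B / V)"
      unfolding lim_ereal by simp
  qed simp
  finally show ?thesis .
qed

lemma limsup_backlog_average_le:
  fixes P A r :: "nat \<Rightarrow> real"
  assumes "\<epsilon> > 0" "V \<ge> 0"
    and bound: "\<And>n. n > 0 \<Longrightarrow> V * P n + \<epsilon> * A n \<le> B + V * ps + r n"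
    and r: "r \<longlonglongrightarrow> 0"
  shows "limsup (\<lambda>n. ereal (A n)) \<le> ereal (B / \<epsilon>) + ereal (V / \<epsilon>) * limsup (\<lambda>n. ereal (ps - P n))"
proof -
  have "ereal (A n) \<le> (ereal (B / \<epsilon>) + ereal (V / \<epsilon>) * ereal (ps - P n)) + ereal (r n / \<epsilon>)"
    if "n > 0" for n
  proof -
    have "A n \<le> B / \<epsilon> + (V / \<epsilon>) * (ps - P n) + r n / \<epsilon>"
      using bound[OF that] \<open>\<epsilon> > 0\<close> by (simp add: field_simps)
    then show ?thesis by simp
  qed
  then have "limsup (\<lambda>n. ereal (A n))
      \<le> limsup (\<lambda>n. (ereal (B / \<epsilon>) + ereal (V / \<epsilon>) * ereal (ps - P n)) + ereal (r n / \<epsilon>))"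
    by (intro Limsup_mono) (auto simp: eventually_sequentially intro!: exI[of _ 1])
  also have "\<dots> \<le> limsup (\<lambda>n. ereal (B / \<epsilon>) + ereal (V / \<epsilon>) * ereal (ps - P n))
      + limsup (\<lambda>n. ereal (r n / \<epsilon>))"
    by (rule ereal_limsup_add_mono)
  also have "limsup (\<lambda>n. ereal (r n / \<epsilon>)) = 0"
    using lim_imp_Limsup[of sequentially "\<lambda>n. ereal (r n / \<epsilon>)" 0] tendsto_divide[OF r tendsto_const, of \<epsilon>]
      \<open>\<epsilon> > 0\<close> by (simp add: zero_ereal_def)
  also have "limsup (\<lambda>n. ereal (B / \<epsilon>) + ereal (V / \<epsilon>) * ereal (ps - P n))
      = ereal (B / \<epsilon>) + limsup (\<lambda>n. ereal (V / \<epsilon>) * ereal (ps - P n))"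
    by (rule Limsup_add_ereal_left) simp_all
  also have "limsup (\<lambda>n. ereal (V / \<epsilon>) * ereal (ps - P n)) = ereal (V / \<epsilon>) * limsup (\<lambda>n. ereal (ps - P n))"
    by (rule limsup_ereal_mult_left) (use \<open>\<epsilon> > 0\<close> \<open>V \<ge> 0\<close> in auto)
  finally show ?thesis by simp
qed

text \<open>The pathwise content of the drift-plus-penalty argument: \<open>c t\<close> and \<open>e t\<close> stand
  for the conditional expectations of the Lyapunov increment \<open>L (t + 1) - L t\<close> and of the
  penalty \<open>p t\<close>, and the hypotheses on \<open>X\<close>, \<open>Y\<close> say that the errors made by replacing
  them with the actual values vanish on average.\<close>
lemma drift_plus_penalty_limsup:
  fixes L c e p a :: "nat \<Rightarrow> real"
  assumes L_nonneg: "\<And>t. L t \<ge> 0" and a_nonneg: "\<And>t. a t \<ge> 0"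
    and "V \<ge> 0" "\<epsilon> \<ge> 0"
    and drift: "\<And>t. c t + V * e t \<le> B + V * ps - \<epsilon> * a t"
    and X: "(\<lambda>n. (\<Sum>t<n. L (Suc t) - L t - c t) / real n) \<longlonglongrightarrow> 0"
    and Y: "(\<lambda>n. (\<Sum>t<n. p t - e t) / real n) \<longlonglongrightarrow> 0"
  shows "V > 0 \<Longrightarrow> limsup (\<lambda>n. ereal ((1 / real n) * (\<Sum>t<n. p t))) \<le> ereal (ps + B / V)"
    and "\<epsilon> > 0 \<Longrightarrow> limsup (\<lambda>n. ereal ((1 / real n) * (\<Sum>t<n. a t)))
      \<le> ereal (B / \<epsilon>) + ereal (V / \<epsilon>) * limsup (\<lambda>n. ereal ((1 / real n) * (\<Sum>t<n. ps - p t)))"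
proof -
  define r where "r = (\<lambda>n. L 0 / real n + (\<Sum>t<n. L (Suc t) - L t - c t) / real n
      + V * ((\<Sum>t<n. p t - e t) / real n))"
  have r: "r \<longlonglongrightarrow> 0"
    using tendsto_add[OF tendsto_add[OF lim_const_over_n X] tendsto_mult[OF tendsto_const Y]]
    unfolding r_def by simp
  have bound: "V * ((1 / real n) * (\<Sum>t<n. p t)) + \<epsilon> * ((1 / real n) * (\<Sum>t<n. a t)) \<le> B + V * ps + r n"
    if "n > 0" for n
  proof -
    have "(\<Sum>t<n. c t) + V * (\<Sum>t<n. e t) \<le> real n * (B + V * ps) - \<epsilon> * (\<Sum>t<n. a t)"
      using sum_mono[of "{..<n}", OF drift]
      by (simp add: sum.distrib sum_subtractf sum_distrib_left)
    moreover have "(\<Sum>t<n. c t) = L n - L 0 - (\<Sum>t<n. L (Suc t) - L t - c t)"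
      using sum_subtractf[of "\<lambda>t. L (Suc t) - L t" c "{..<n}"] sum_lessThan_telescope[of L n] by linarith
    moreover have "V * (\<Sum>t<n. e t) = V * (\<Sum>t<n. p t) - V * (\<Sum>t<n. p t - e t)"
      by (simp add: sum_subtractf right_diff_distrib)
    ultimately have "V * (\<Sum>t<n. p t) + \<epsilon> * (\<Sum>t<n. a t)
        \<le> real n * (B + V * ps) + L 0 + (\<Sum>t<n. L (Suc t) - L t - c t) + V * (\<Sum>t<n. p t - e t)"
      using L_nonneg[of n] by linarith
    then have "(V * (\<Sum>t<n. p t) + \<epsilon> * (\<Sum>t<n. a t)) / real n \<le> (real n * (B + V * ps) + L 0
        + (\<Sum>t<n. L (Suc t) - L t - c t) + V * (\<Sum>t<n. p t - e t)) / real n"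
      by (rule divide_right_mono) simp
    then show ?thesis using that by (simp add: r_def field_simps)
  qed
  show "V > 0 \<Longrightarrow> limsup (\<lambda>n. ereal ((1 / real n) * (\<Sum>t<n. p t))) \<le> ereal (ps + B / V)"
    using a_nonneg \<open>\<epsilon> \<ge> 0\<close> bound r
    by (intro limsup_penalty_average_le[where A="\<lambda>n. (1 / real n) * (\<Sum>t<n. a t)"])
       (auto intro!: divide_nonneg_nonneg sum_nonneg)
  assume "\<epsilon> > 0"
  have eq: "eventually (\<lambda>n. ereal (ps - (1 / real n) * (\<Sum>t<n. p t))
      = ereal ((1 / real n) * (\<Sum>t<n. ps - p t))) sequentially"
    by (auto simp: eventually_sequentially sum_subtractf field_simps intro!: exI[of _ 1])
  have "limsup (\<lambda>n. ereal ((1 / real n) * (\<Sum>t<n. a t)))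
      \<le> ereal (B / \<epsilon>) + ereal (V / \<epsilon>) * limsup (\<lambda>n. ereal (ps - (1 / real n) * (\<Sum>t<n. p t)))"
    using \<open>\<epsilon> > 0\<close> \<open>V \<ge> 0\<close> bound r by (rule limsup_backlog_average_le)
  then show "limsup (\<lambda>n. ereal ((1 / real n) * (\<Sum>t<n. a t)))
      \<le> ereal (B / \<epsilon>) + ereal (V / \<epsilon>) * limsup (\<lambda>n. ereal ((1 / real n) * (\<Sum>t<n. ps - p t)))"
    using Limsup_eq[OF eq] by simp
qed

theorem theorem6:
  fixes M :: "'a measure" and K :: nat
    and Q :: "nat \<Rightarrow> nat \<Rightarrow> 'a \<Rightarrow> real"   \<comment> \<open>Q t k = Q_k(t)\<close>
    and p :: "nat \<Rightarrow> 'a \<Rightarrow> real"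
    and w :: "nat \<Rightarrow> real" and D B pstar V \<epsilon> :: real
  assumes "prob_space M"
    and Qmeas: "\<And>t k. Q t k \<in> borel_measurable M"
    and pmeas: "\<And>t. p t \<in> borel_measurable M"
    and w_pos: "\<And>k. k \<in> {1..K} \<Longrightarrow> w k > 0"
    and p_sq: "\<And>t. integrable M (\<lambda>x. (p t x)^2)"
    and p_sum: "summable (\<lambda>\<tau>. (\<integral>x. (p \<tau> x)^2 \<partial>M) / (real \<tau>)^2)"
    and D_pos: "D > 0"
    and fourth: "\<And>t k. k \<in> {1..K} \<Longrightarrow>
        AE x in M. nn_cond_exp M (qsig M K Q t) (\<lambda>y. ennreal ((Q (Suc t) k y - Q t k y)^4)) x \<le> ennreal D"
    and Q_sq: "\<And>t k. k \<in> {1..K} \<Longrightarrow> integrable M (\<lambda>x. (Q t k x)^2)"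
    and Q_sum: "\<And>k. k \<in> {1..K} \<Longrightarrow> summable (\<lambda>t. (\<integral>x. (Q t k x)^2 \<partial>M) / (real t)^2)"
    and V_nonneg: "V \<ge> 0" and eps_nonneg: "\<epsilon> \<ge> 0"
    and drift: "\<And>t. AE x in M.
        real_cond_exp M (hist M K Q p t) (\<lambda>y. lyap K w (\<lambda>k. Q (Suc t) k y) - lyap K w (\<lambda>k. Q t k y)) x
        + V * real_cond_exp M (hist M K Q p t) (p t) x
        \<le> B + V * pstar - \<epsilon> * (\<Sum>k=1..K. \<bar>Q t k x\<bar>)"
  shows "(V > 0 \<longrightarrow> (AE x in M.
            limsup (\<lambda>t. ereal ((1 / real t) * (\<Sum>\<tau><t. p \<tau> x))) \<le> ereal (pstar + B / V)))
       \<and> (\<epsilon> > 0 \<longrightarrow> (AE x in M.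
            limsup (\<lambda>t. ereal ((1 / real t) * (\<Sum>\<tau><t. \<Sum>k=1..K. \<bar>Q \<tau> k x\<bar>)))
              \<le> ereal (B / \<epsilon>) + ereal (V / \<epsilon>) *
                 limsup (\<lambda>t. ereal ((1 / real t) * (\<Sum>\<tau><t. pstar - p \<tau> x)))))"
proof -
  interpret filtered_prob_space M "hist M K Q p"
    by (rule filtered_prob_space_hist[OF assms(1) Qmeas pmeas])
  have lyap_average: "AE x in M. (\<lambda>n. (\<Sum>t<n. lyap K w (\<lambda>k. Q (Suc t) k x) - lyap K w (\<lambda>k. Q t k x)
      - real_cond_exp M (hist M K Q p t) (\<lambda>y. lyap K w (\<lambda>k. Q (Suc t) k y) - lyap K w (\<lambda>k. Q t k y)) x)
      / real n) \<longlonglongrightarrow> 0"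
    by (rule AE_average_lyap_increment_cond_centered[OF assms(1) Qmeas pmeas Q_sq Q_sum
          less_imp_le[OF D_pos] fourth])
  have penalty_average: "AE x in M. (\<lambda>n. (\<Sum>t<n. p t x - real_cond_exp M (hist M K Q p t) (p t) x)
      / real n) \<longlonglongrightarrow> 0"
    by (intro AE_average_cond_centered_tendsto_zero measurable_hist_p p_sq p_sum) simp
  have "AE x in M. \<forall>t. real_cond_exp M (hist M K Q p t)
      (\<lambda>y. lyap K w (\<lambda>k. Q (Suc t) k y) - lyap K w (\<lambda>k. Q t k y)) x
        + V * real_cond_exp M (hist M K Q p t) (p t) x \<le> B + V * pstar - \<epsilon> * (\<Sum>k=1..K. \<bar>Q t k x\<bar>)"
    using drift by (simp add: AE_all_countable)
  with lyap_average penalty_average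
  have "AE x in M. (V > 0 \<longrightarrow> limsup (\<lambda>t. ereal ((1 / real t) * (\<Sum>\<tau><t. p \<tau> x))) \<le> ereal (pstar + B / V))
       \<and> (\<epsilon> > 0 \<longrightarrow> limsup (\<lambda>t. ereal ((1 / real t) * (\<Sum>\<tau><t. \<Sum>k=1..K. \<bar>Q \<tau> k x\<bar>)))
              \<le> ereal (B / \<epsilon>) + ereal (V / \<epsilon>) *
                 limsup (\<lambda>t. ereal ((1 / real t) * (\<Sum>\<tau><t. pstar - p \<tau> x))))"
  proof eventually_elim
    case (elim x)
    note pathwise = drift_plus_penalty_limsup[where L="\<lambda>t. lyap K w (\<lambda>k. Q t k x)"
        and a="\<lambda>t. \<Sum>k=1..K. \<bar>Q t k x\<bar>", OF lyap_nonneg[OF w_pos] _ V_nonneg eps_nonneg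
        elim(3)[rule_format] elim(1) elim(2)]
    show ?case using pathwise by (auto intro: sum_nonneg)
  qed
  then show ?thesis by (auto elim: AE_mp)
qed

end
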